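(* Let $\boldsymbol{m}\in\mathbb{N}^2$. The rectangular set $\Gamma_\square=\{\boldsymbol{\gamma}\in\mathrm{K}:\ -m_2<\gamma_2\le m_2,\ \gamma_1+\gamma_2\text{ even}\}$ is a spectral index set for $\mathrm{I}^{(\boldsymbol{m})}$, i.e. $\{\chi_{\boldsymbol{\gamma}}:\boldsymbol{\gamma}\in\Gamma_\square\}$ is an orthogonal basis of the $(2m_1+1)m_2$-dimensional space $(\mathcal{L}(\mathrm{I}^{(\boldsymbol{m})}),\langle\cdot,\cdot\rangle_w)$. Moreover, for $\boldsymbol{\gamma}\in\Gamma_\square$, $\|\chi_{\boldsymbol{\gamma}}\|_w^2=1$ if $\gamma_1\in\{0,2m_1\}$ and $\|\chi_{\boldsymbol{\gamma}}\|_w^2=\frac12$ otherwise.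
   Context: $\mathrm{I}^{(\boldsymbol{m})}=\{(i_1,i_2)\in\mathbb{Z}^2:\ 0\le i_1\le m_1,\ -2m_2<i_2\le 2m_2,\ i_2\le0\text{ if }i_1=m_1,\ i_1+i_2\text{ even}\}$; $\mathcal{L}(\mathrm{I}^{(\boldsymbol{m})})$ is the space of all functions $\mathrm{I}^{(\boldsymbol{m})}\to\mathbb{C}$. Weights: $w_{\boldsymbol{i}}=\frac{1}{4m_1m_2}$ if $i_1=0$, $w_{\boldsymbol{i}}=\frac{2}{4m_1m_2}$ if $0<i_1\le m_1$; inner product $\langle f,h\rangle_w=\sum_{\boldsymbol{i}\in\mathrm{I}^{(\boldsymbol{m})}}w_{\boldsymbol{i}}f(\boldsymbol{i})\overline{h(\boldsymbol{i})}$, norm $\|\cdot\|_w$. For $\boldsymbol{\gamma}\in\mathbb{Z}^2$, $\chi_{\boldsymbol{\gamma}}(\boldsymbol{i})=\cos\!\big(\frac{\gamma_1i_1\pi}{2m_1}\big)e^{\mathrm{i}\gamma_2i_2\pi/(2m_2)}$. $\mathrm{K}=\{\boldsymbol{\gamma}\in\mathbb{Z}^2: 0\le\gamma_1\le2m_1,\ -2m_2<\gamma_2\le2m_2\}$. A spectral index set for $\mathrm{I}^{(\boldsymbol{m})}$ is a set $\Gamma\subseteq\mathrm{K}$ such that $\gamma_1+\gamma_2$ is even for all $\boldsymbol{\gamma}\in\Gamma$ and $\{\chi_{\boldsymbol{\gamma}}:\boldsymbol{\gamma}\in\Gamma\}$ is an orthogonal basis of $(\mathcal{L}(\mathrm{I}^{(\boldsymbol{m})}),\langle\cdot,\cdot\rangle_w)$.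 *)

theory Defs
  imports "HOL-Analysis.Analysis"
begin

definition Iset :: "nat \<Rightarrow> nat \<Rightarrow> (int \<times> int) set" where
  "Iset m1 m2 = {(i1, i2). 0 \<le> i1 \<and> i1 \<le> int m1 \<and> - 2 * int m2 < i2 \<and> i2 \<le> 2 * int m2
      \<and> (i1 = int m1 \<longrightarrow> i2 \<le> 0) \<and> even (i1 + i2)}"

definition wgt :: "nat \<Rightarrow> nat \<Rightarrow> int \<times> int \<Rightarrow> real" where
  "wgt m1 m2 i = (if fst i = 0 then 1 / (4 * real m1 * real m2) else 2 / (4 * real m1 * real m2))"

text \<open>Functions on Iset are represented by arbitrary functions int*int => complex; only
  their values on Iset matter.\<close>

definition inner_w :: "nat \<Rightarrow> nat \<Rightarrow> (int \<times> int \<Rightarrow> complex) \<Rightarrow> (int \<times> int \<Rightarrow> complex) \<Rightarrow> complex" where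
  "inner_w m1 m2 f h = (\<Sum>i\<in>Iset m1 m2. complex_of_real (wgt m1 m2 i) * f i * cnj (h i))"

definition norm_w :: "nat \<Rightarrow> nat \<Rightarrow> (int \<times> int \<Rightarrow> complex) \<Rightarrow> real" where
  "norm_w m1 m2 f = sqrt (Re (inner_w m1 m2 f f))"

definition chi :: "nat \<Rightarrow> nat \<Rightarrow> int \<times> int \<Rightarrow> int \<times> int \<Rightarrow> complex" where
  "chi m1 m2 \<gamma> i = complex_of_real (cos (real_of_int (fst \<gamma>) * real_of_int (fst i) * pi / (2 * real m1)))
      * exp (\<i> * complex_of_real (real_of_int (snd \<gamma>) * real_of_int (snd i) * pi / (2 * real m2)))"

definition Kset :: "nat \<Rightarrow> nat \<Rightarrow> (int \<times> int) set" where
  "Kset m1 m2 = {(g1, g2). 0 \<le> g1 \<and> g1 \<le> 2 * int m1 \<and> - 2 * int m2 < g2 \<and> g2 \<le> 2 * int m2}"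

definition spectral_index_set :: "nat \<Rightarrow> nat \<Rightarrow> (int \<times> int) set \<Rightarrow> bool" where
  "spectral_index_set m1 m2 \<Gamma> \<longleftrightarrow>
     \<Gamma> \<subseteq> Kset m1 m2 \<and> (\<forall>\<gamma>\<in>\<Gamma>. even (fst \<gamma> + snd \<gamma>)) \<and>
     (\<forall>\<gamma>\<in>\<Gamma>. \<forall>\<gamma>'\<in>\<Gamma>. \<gamma> \<noteq> \<gamma>' \<longrightarrow> inner_w m1 m2 (chi m1 m2 \<gamma>) (chi m1 m2 \<gamma>') = 0) \<and>
     (\<forall>\<gamma>\<in>\<Gamma>. \<exists>i\<in>Iset m1 m2. chi m1 m2 \<gamma> i \<noteq> 0) \<and>
     (\<forall>f :: int \<times> int \<Rightarrow> complex. \<exists>c :: int \<times> int \<Rightarrow> complex.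
        \<forall>i\<in>Iset m1 m2. f i = (\<Sum>\<gamma>\<in>\<Gamma>. c \<gamma> * chi m1 m2 \<gamma> i))"

definition Gamma_sq :: "nat \<Rightarrow> nat \<Rightarrow> (int \<times> int) set" where
  "Gamma_sq m1 m2 = {\<gamma> \<in> Kset m1 m2. - int m2 < snd \<gamma> \<and> snd \<gamma> \<le> int m2 \<and> even (fst \<gamma> + snd \<gamma>)}"

end

theory Submission
  imports Defs "Jordan_Normal_Form.Determinant"
begin

text \<open>
  Both index sets are unions of rows of integers of a fixed parity, and counting the rows shows
  that both have \<open>(2 m\<^sub>1 + 1) m\<^sub>2\<close> elements. The inner product of two characters splits into a sum over the
  rows \<open>i\<^sub>1\<close> of a cosine product times a geometric sum in \<open>i\<^sub>2\<close>. If the second frequencies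
  differ, each row sum is a full sum over roots of unity and vanishes; on the half-length
  last row \<open>i\<^sub>1 = m\<^sub>1\<close> this needs an even frequency difference, and otherwise one of the
  cosines vanishes there. If they agree, the row weights are the trapezoidal weights, and by
  the reflection symmetry \<open>j \<mapsto> 2 m\<^sub>1 - j\<close> the weighted cosine sum becomes a sum over a full
  period, again a sum of roots of unity. Orthogonality of as many nonzero vectors as the
  dimension then gives a basis.
\<close>

lemma cis_eq_1_iff: "cis t = 1 \<longleftrightarrow> (\<exists>k::int. t = 2 * pi * of_int k)"
  by (auto simp: cis_conv_exp exp_eq_1 mult_ac)

lemma sum_cis_period:
  assumes "n > 0"
  shows "(\<Sum>k<n. cis (2 * pi * of_int h * real k / real n)) = (if int n dvd h then of_nat n else 0)"
proof (cases "int n dvd h")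
  case True
  then obtain q where "h = int n * q" by blast
  hence "cis (2 * pi * of_int h * real k / real n) = 1" for k
    using assms by (simp add: cis_eq_1_iff) (rule exI[of _ "q * int k"], simp)
  thus ?thesis using True by simp
next
  case False
  define \<omega> where "\<omega> = cis (2 * pi * of_int h / real n)"
  have "\<omega> \<noteq> 1"
  proof
    assume "\<omega> = 1"
    then obtain k :: int where "2 * pi * of_int h / real n = 2 * pi * of_int k"
      by (auto simp: \<omega>_def cis_eq_1_iff)
    hence "of_int h = (of_int (int n * k) :: real)" using assms by (simp add: field_simps)
    hence "h = int n * k" by (simp only: of_int_eq_iff)
    thus False using False by simp
  qed
  \<comment> \<open>\<open>Complex_Transcendental\<close> shadows \<open>DeMoivre\<close> by a version for \<open>cos + \<i> sin\<close>\<close>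
  moreover have "\<omega> ^ n = cis (real n * (2 * pi * of_int h / real n))"
    unfolding \<omega>_def by (rule Complex.DeMoivre)
  hence "\<omega> ^ n = 1" using assms by (simp add: cis_eq_1_iff)
  moreover have "cis (2 * pi * of_int h * real k / real n) = \<omega> ^ k" for k
    by (simp add: \<omega>_def Complex.DeMoivre mult_ac)
  ultimately show ?thesis using False by (simp add: geometric_sum)
qed

lemma sum_cos_period:
  assumes "n > 0"
  shows "(\<Sum>k<n. cos (2 * pi * of_int h * real k / real n)) = (if int n dvd h then real n else 0)"
  using arg_cong[OF sum_cis_period[OF assms, of h], of Re] by (simp add: Re_sum)

definition parity_block :: "int \<Rightarrow> nat \<Rightarrow> int \<Rightarrow> int set" where
  "parity_block a n p = {x. a < x \<and> x \<le> a + 2 * int n \<and> even (x + p)}"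

lemma parity_block_progression:
  obtains x0 where "parity_block a n p = (\<lambda>k. x0 + 2 * int k) ` {..<n}"
proof
  define x0 where "x0 = (if even (a + 1 + p) then a + 1 else a + 2)"
  have x0: "even (x0 + p)" "a < x0" "x0 \<le> a + 2" unfolding x0_def by auto
  show "parity_block a n p = (\<lambda>k. x0 + 2 * int k) ` {..<n}"
  proof (rule equalityI; rule subsetI)
    fix x assume "x \<in> parity_block a n p"
    hence x: "a < x" "x \<le> a + 2 * int n" "even (x + p)" by (auto simp: parity_block_def)
    have "even (x - x0)" using x(3) x0(1) by presburger
    then obtain t where t: "x - x0 = 2 * t" by blast
    have "0 \<le> t" "t < int n" using x(1,2) x0(2,3) t by linarith+
    hence "x = x0 + 2 * int (nat t) \<and> nat t < n" using t by simp
    thus "x \<in> (\<lambda>k. x0 + 2 * int k) ` {..<n}" by blast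
  next
    fix x assume "x \<in> (\<lambda>k. x0 + 2 * int k) ` {..<n}"
    then obtain k where "k < n" "x = x0 + 2 * int k" by blast
    thus "x \<in> parity_block a n p" using x0 by (auto simp: parity_block_def)
  qed
qed

lemma inj_progression: "inj (\<lambda>k. x0 + 2 * int k)"
  by (auto simp: inj_def)

lemma finite_parity_block: "finite (parity_block a n p)"
  by (metis parity_block_progression finite_imageI finite_lessThan)

lemma card_parity_block: "card (parity_block a n p) = n"
  by (metis parity_block_progression card_image inj_progression inj_on_subset subset_UNIV card_lessThan)

lemma sum_cis_parity_block:
  assumes "n > 0" "\<not> int n dvd h"
  shows "(\<Sum>x\<in>parity_block a n p. cis (pi * of_int h * of_int x / real n)) = 0"
proof -
  obtain x0 where block: "parity_block a n p = (\<lambda>k. x0 + 2 * int k) ` {..<n}"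
    by (rule parity_block_progression)
  have "(\<Sum>x\<in>parity_block a n p. cis (pi * of_int h * of_int x / real n))
      = (\<Sum>k<n. cis (pi * of_int h * of_int x0 / real n) * cis (2 * pi * of_int h * real k / real n))"
    unfolding block by (simp add: sum.reindex inj_on_def cis_mult add_divide_distrib algebra_simps)
  also have "\<dots> = 0"
    using sum_cis_period[OF assms(1), of h] assms(2) by (simp add: sum_distrib_left[symmetric])
  finally show ?thesis .
qed

lemma sum_symmetric_fold:
  fixes F :: "int \<Rightarrow> real"
  assumes "m > 0" "\<And>j. F (2 * int m - j) = F j"
  shows "(\<Sum>j\<in>{0..<2 * int m}. F j) = F 0 + F (int m) + 2 * (\<Sum>j\<in>{1..<int m}. F j)"
proof -
  have split: "{0..<2 * int m} = {0} \<union> {1..<int m} \<union> {int m} \<union> {int m + 1..<2 * int m}"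
    using assms(1) by auto
  have "(\<Sum>j\<in>{0..<2 * int m}. F j)
      = F 0 + (\<Sum>j\<in>{1..<int m}. F j) + F (int m) + (\<Sum>j\<in>{int m + 1..<2 * int m}. F j)"
    unfolding split using assms(1) by (subst sum.union_disjoint, simp, simp, force)+ (simp add: sum.union_disjoint)
  also have "(\<Sum>j\<in>{int m + 1..<2 * int m}. F j) = (\<Sum>j\<in>{1..<int m}. F j)"
    by (rule sum.reindex_bij_witness[where i="\<lambda>j. 2 * int m - j" and j="\<lambda>j. 2 * int m - j"])
       (auto simp: assms(2))
  finally show ?thesis by simp
qed

lemma dvd_iff_eq_0_if_abs_less:
  fixes n x :: int
  assumes "\<bar>x\<bar> < n"
  shows "n dvd x \<longleftrightarrow> x = 0"
  using dvd_imp_le_int[of x n] assms by auto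

lemma biorthogonal_imp_complete:
  fixes u v :: "'b \<Rightarrow> 'a \<Rightarrow> 'c::field"
  assumes "finite I" "finite G" "card G = card I"
    and biorth: "\<And>g g'. g \<in> G \<Longrightarrow> g' \<in> G \<Longrightarrow> (\<Sum>i\<in>I. u g i * v g' i) = (if g = g' then 1 else 0)"
    and "i \<in> I" "j \<in> I"
  shows "(\<Sum>g\<in>G. v g i * u g j) = (if i = j then 1 else 0)"
proof -
  define N where "N = card I"
  obtain fI where fI: "bij_betw fI {0..<N} I"
    using ex_bij_betw_nat_finite[OF assms(1)] unfolding N_def by blast
  obtain fG where fG: "bij_betw fG {0..<N} G"
    using ex_bij_betw_nat_finite[OF assms(2)] unfolding N_def assms(3) by blast
  define U where "U = mat N N (\<lambda>(r, s). u (fG r) (fI s))"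
  define V where "V = mat N N (\<lambda>(s, r). v (fG r) (fI s))"
  have "U * V = 1\<^sub>m N"
  proof (rule eq_matI)
    fix r r' assume "r < dim_row (1\<^sub>m N)" "r' < dim_col (1\<^sub>m N)"
    hence rr': "r < N" "r' < N" by auto
    hence "(U * V) $$ (r, r') = (\<Sum>s\<in>{0..<N}. u (fG r) (fI s) * v (fG r') (fI s))"
      by (simp add: U_def V_def scalar_prod_def)
    also have "\<dots> = (\<Sum>i\<in>I. u (fG r) i * v (fG r') i)"
      by (rule sum.reindex_bij_betw[OF fI])
    also have "\<dots> = (if fG r = fG r' then 1 else 0)"
      using rr' bij_betw_apply[OF fG] by (intro biorth) auto
    also have "fG r = fG r' \<longleftrightarrow> r = r'"
      using rr' bij_betw_imp_inj_on[OF fG] by (auto simp: inj_on_def)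
    finally show "(U * V) $$ (r, r') = 1\<^sub>m N $$ (r, r')" using rr' by simp
  qed (auto simp: U_def V_def)
  hence VU: "V * U = 1\<^sub>m N"
    by (rule mat_mult_left_right_inverse[rotated 2]) (simp_all add: U_def V_def)
  obtain s s' where s: "s < N" "i = fI s" and s': "s' < N" "j = fI s'"
    using fI \<open>i \<in> I\<close> \<open>j \<in> I\<close> by (auto simp: bij_betw_def)
  have "(\<Sum>g\<in>G. v g i * u g j) = (\<Sum>r\<in>{0..<N}. v (fG r) (fI s) * u (fG r) (fI s'))"
    unfolding s s' by (rule sum.reindex_bij_betw[OF fG, symmetric])
  also have "\<dots> = (V * U) $$ (s, s')"
    using s s' by (simp add: U_def V_def scalar_prod_def)
  also have "\<dots> = (if s = s' then 1 else 0)"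
    using VU s s' by simp
  also have "s = s' \<longleftrightarrow> i = j"
    using s s' bij_betw_imp_inj_on[OF fI] by (auto simp: inj_on_def)
  finally show ?thesis .
qed

lemma orthogonal_family_spans:
  fixes w :: "'a \<Rightarrow> complex" and ch :: "'b \<Rightarrow> 'a \<Rightarrow> complex" and f :: "'a \<Rightarrow> complex"
  assumes "finite I" "finite G" "card G = card I"
    and orth: "\<And>g g'. g \<in> G \<Longrightarrow> g' \<in> G \<Longrightarrow>
      (\<Sum>i\<in>I. w i * ch g i * cnj (ch g' i)) = (if g = g' then \<nu> g else 0)"
    and nonzero: "\<And>g. g \<in> G \<Longrightarrow> \<nu> g \<noteq> 0"
  shows "\<exists>c. \<forall>i\<in>I. f i = (\<Sum>g\<in>G. c g * ch g i)"
proof -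
  define u where "u g i = w i * cnj (ch g i) / \<nu> g" for g i
  have complete: "(\<Sum>g\<in>G. ch g j * u g i) = (if j = i then 1 else 0)" if "i \<in> I" "j \<in> I" for i j
  proof (rule biorthogonal_imp_complete[OF assms(1-3) _ that(2,1)])
    fix g g' assume "g \<in> G" "g' \<in> G"
    thus "(\<Sum>i\<in>I. u g i * ch g' i) = (if g = g' then 1 else 0)"
      using orth[of g' g] nonzero[of g] nonzero[of g'] unfolding u_def
      by (simp add: sum_divide_distrib[symmetric] mult_ac)
  qed
  show ?thesis
  proof (intro exI ballI)
    fix j assume "j \<in> I"
    have "(\<Sum>g\<in>G. (\<Sum>i\<in>I. f i * u g i) * ch g j) = (\<Sum>g\<in>G. \<Sum>i\<in>I. f i * (ch g j * u g i))"
      unfolding sum_distrib_right by (simp add: mult_ac)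
    also have "\<dots> = (\<Sum>i\<in>I. f i * (\<Sum>g\<in>G. ch g j * u g i))"
      by (subst sum.swap) (simp add: sum_distrib_left)
    also have "\<dots> = f j"
      using complete \<open>j \<in> I\<close> assms(1) by (simp add: if_distrib[where f="(*) _"] cong: if_cong)
    finally show "f j = (\<Sum>g\<in>G. (\<Sum>i\<in>I. f i * u g i) * ch g j)" by simp
  qed
qed

definition cos_mode :: "nat \<Rightarrow> int \<Rightarrow> int \<Rightarrow> real" where
  "cos_mode m a j = cos (of_int a * of_int j * pi / (2 * real m))"

lemma cos_mode_mult: "cos_mode m a j * cos_mode m b j = (cos_mode m (a - b) j + cos_mode m (a + b) j) / 2"
  unfolding cos_mode_def cos_times_cos by (simp add: diff_divide_distrib add_divide_distrib algebra_simps)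

lemma cos_mode_reflect:
  assumes "even e" "m > 0"
  shows "cos_mode m e (2 * int m - j) = cos_mode m e j"
proof -
  obtain h where h: "e = 2 * h" using assms(1) by blast
  have "of_int e * of_int (2 * int m - j) * pi / (2 * real m)
      = 2 * pi * of_int h - of_int e * of_int j * pi / (2 * real m)"
    using assms(2) by (simp add: h field_simps)
  thus ?thesis unfolding cos_mode_def by (simp add: cos_diff)
qed

lemma cos_mode_odd_half_period:
  assumes "odd a" "m > 0"
  shows "cos_mode m a (int m) = 0"
proof -
  have "of_int a * of_int (int m) * pi / (2 * real m) = of_int a * (pi / 2)" using assms(2) by simp
  thus ?thesis unfolding cos_mode_def using assms(1) cos_zero_iff_int by auto
qed

lemma sum_cos_mode_period:
  assumes "even e" "m > 0"
  shows "(\<Sum>j\<in>{0..<2 * int m}. cos_mode m e j) = (if 4 * int m dvd e then 2 * real m else 0)"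
proof -
  obtain h where h: "e = 2 * h" using assms(1) by blast
  have "{0..<2 * int m} = int ` {..<2 * m}"
    by (auto simp: image_iff intro!: bexI[where x="nat _"])
  hence "(\<Sum>j\<in>{0..<2 * int m}. cos_mode m e j)
      = (\<Sum>k<2 * m. cos (2 * pi * of_int h * real k / real (2 * m)))"
    by (simp add: sum.reindex cos_mode_def h mult_ac)
  also have "\<dots> = (if int (2 * m) dvd h then real (2 * m) else 0)"
    using assms(2) by (intro sum_cos_period) simp
  also have "int (2 * m) dvd h \<longleftrightarrow> 4 * int m dvd e"
    by (auto simp: h)
  finally show ?thesis by simp
qed

definition Irow :: "nat \<Rightarrow> nat \<Rightarrow> int \<Rightarrow> int set" where
  "Irow m1 m2 i1 = parity_block (- 2 * int m2) (if i1 = int m1 then m2 else 2 * m2) i1"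

lemma Iset_eq_Sigma: "Iset m1 m2 = Sigma {0..int m1} (Irow m1 m2)"
  unfolding Iset_def Irow_def parity_block_def by (auto simp: add.commute split: if_splits)

lemma finite_Iset: "finite (Iset m1 m2)"
  unfolding Iset_eq_Sigma Irow_def by (auto intro: finite_parity_block)

lemma card_Iset: "card (Iset m1 m2) = (2 * m1 + 1) * m2"
proof -
  have "{0..int m1} = insert (int m1) {0..<int m1}" by auto
  hence "card (Iset m1 m2) = (\<Sum>i1\<in>insert (int m1) {0..<int m1}. card (Irow m1 m2 i1))"
    unfolding Iset_eq_Sigma by (simp add: card_SigmaI Irow_def finite_parity_block)
  also have "\<dots> = m2 + (\<Sum>i1\<in>{0..<int m1}. 2 * m2)"
    by (simp add: Irow_def card_parity_block)
  finally show ?thesis by simp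
qed

lemma Gamma_sq_eq_Sigma: "Gamma_sq m1 m2 = Sigma {0..2 * int m1} (\<lambda>a. parity_block (- int m2) m2 a)"
  unfolding Gamma_sq_def Kset_def parity_block_def by (auto simp: add.commute)

lemma finite_Gamma_sq: "finite (Gamma_sq m1 m2)"
  unfolding Gamma_sq_eq_Sigma by (auto intro: finite_parity_block)

lemma card_Gamma_sq: "card (Gamma_sq m1 m2) = (2 * m1 + 1) * m2"
  unfolding Gamma_sq_eq_Sigma
  by (subst card_SigmaI) (auto simp: finite_parity_block card_parity_block nat_add_distrib nat_mult_distrib)

lemma chi_mult_cnj:
  "chi m1 m2 \<gamma> i * cnj (chi m1 m2 \<gamma>' i)
    = of_real (cos_mode m1 (fst \<gamma>) (fst i) * cos_mode m1 (fst \<gamma>') (fst i))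
      * cis (pi * of_int (snd \<gamma> - snd \<gamma>') * of_int (snd i) / real (2 * m2))"
proof -
  have "cis (of_int (snd \<gamma>) * of_int (snd i) * pi / (2 * real m2))
        * cnj (cis (of_int (snd \<gamma>') * of_int (snd i) * pi / (2 * real m2)))
      = cis (pi * of_int (snd \<gamma> - snd \<gamma>') * of_int (snd i) / real (2 * m2))"
    by (simp add: cis_cnj cis_mult) (rule arg_cong[where f=cis], simp add: diff_divide_distrib[symmetric] algebra_simps)
  thus ?thesis
    unfolding chi_def cos_mode_def cis_conv_exp[symmetric] by (simp add: mult_ac)
qed

lemma inner_w_chi_by_rows:
  "inner_w m1 m2 (chi m1 m2 \<gamma>) (chi m1 m2 \<gamma>')
    = (\<Sum>i1\<in>{0..int m1}. of_real (wgt m1 m2 (i1, 0) * cos_mode m1 (fst \<gamma>) i1 * cos_mode m1 (fst \<gamma>') i1)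
        * (\<Sum>i2\<in>Irow m1 m2 i1. cis (pi * of_int (snd \<gamma> - snd \<gamma>') * of_int i2 / real (2 * m2))))"
proof -
  have "inner_w m1 m2 (chi m1 m2 \<gamma>) (chi m1 m2 \<gamma>')
      = (\<Sum>i1\<in>{0..int m1}. \<Sum>i2\<in>Irow m1 m2 i1.
           of_real (wgt m1 m2 (i1, i2)) * (chi m1 m2 \<gamma> (i1, i2) * cnj (chi m1 m2 \<gamma>' (i1, i2))))"
    unfolding inner_w_def Iset_eq_Sigma
    by (subst sum.Sigma) (auto simp: Irow_def finite_parity_block mult.assoc)
  also have "\<dots> = (\<Sum>i1\<in>{0..int m1}. \<Sum>i2\<in>Irow m1 m2 i1.
      of_real (wgt m1 m2 (i1, 0) * cos_mode m1 (fst \<gamma>) i1 * cos_mode m1 (fst \<gamma>') i1)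
        * cis (pi * of_int (snd \<gamma> - snd \<gamma>') * of_int i2 / real (2 * m2)))"
    by (intro sum.cong refl) (simp add: chi_mult_cnj wgt_def)
  finally show ?thesis by (simp add: sum_distrib_left)
qed

lemma sum_cis_Irow:
  assumes "m2 > 0" "d \<noteq> 0" "\<bar>d\<bar> < 2 * int m2" "i1 = int m1 \<longrightarrow> even d"
  shows "(\<Sum>i2\<in>Irow m1 m2 i1. cis (pi * of_int d * of_int i2 / real (2 * m2))) = 0"
proof (cases "i1 = int m1")
  case True
  then obtain h where h: "d = 2 * h" using assms(4) by blast
  have "\<not> int m2 dvd h" using dvd_iff_eq_0_if_abs_less[of h "int m2"] assms(2,3) h by auto
  hence "(\<Sum>i2\<in>parity_block (- 2 * int m2) m2 i1. cis (pi * of_int h * of_int i2 / real m2)) = 0"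
    using assms(1) by (intro sum_cis_parity_block)
  moreover have "pi * of_int d * of_int i2 / real (2 * m2) = pi * of_int h * of_int i2 / real m2" for i2
    by (simp add: h)
  ultimately show ?thesis using True by (simp add: Irow_def)
next
  case False
  have "\<not> int (2 * m2) dvd d" using dvd_iff_eq_0_if_abs_less[of d "2 * int m2"] assms(2,3) by auto
  thus ?thesis using False assms(1) sum_cis_parity_block[of "2 * m2" d "- 2 * int m2" i1]
    by (simp add: Irow_def)
qed

lemma inner_w_chi_distinct_snd:
  assumes "m1 > 0" "m2 > 0" "even (fst \<gamma> + snd \<gamma>)" "even (fst \<gamma>' + snd \<gamma>')"
    and "snd \<gamma> \<noteq> snd \<gamma>'" "\<bar>snd \<gamma> - snd \<gamma>'\<bar> < 2 * int m2"
  shows "inner_w m1 m2 (chi m1 m2 \<gamma>) (chi m1 m2 \<gamma>') = 0"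
  unfolding inner_w_chi_by_rows
proof (intro sum.neutral ballI)
  fix i1
  show "of_real (wgt m1 m2 (i1, 0) * cos_mode m1 (fst \<gamma>) i1 * cos_mode m1 (fst \<gamma>') i1)
      * (\<Sum>i2\<in>Irow m1 m2 i1. cis (pi * of_int (snd \<gamma> - snd \<gamma>') * of_int i2 / real (2 * m2))) = 0"
  proof (cases "i1 = int m1 \<and> odd (snd \<gamma> - snd \<gamma>')")
    case True
    \<comment> \<open>on the short row the frequency difference may be odd, but then one cosine vanishes there\<close>
    hence "odd (fst \<gamma>) \<or> odd (fst \<gamma>')" using assms(3,4) by presburger
    hence "cos_mode m1 (fst \<gamma>) i1 = 0 \<or> cos_mode m1 (fst \<gamma>') i1 = 0"
      using True cos_mode_odd_half_period[OF _ assms(1)] by auto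
    thus ?thesis by auto
  next
    case False
    have "(\<Sum>i2\<in>Irow m1 m2 i1. cis (pi * of_int (snd \<gamma> - snd \<gamma>') * of_int i2 / real (2 * m2))) = 0"
      using False assms(5,6) by (intro sum_cis_Irow[OF assms(2)]) auto
    thus ?thesis by (simp only: mult_zero_right)
  qed
qed

lemma sum_Irow_weighted:
  fixes F :: "int \<Rightarrow> real"
  assumes "m1 > 0" "m2 > 0"
  shows "(\<Sum>i1\<in>{0..int m1}. wgt m1 m2 (i1, 0) * real (card (Irow m1 m2 i1)) * F i1)
       = (F 0 + F (int m1) + 2 * (\<Sum>j\<in>{1..<int m1}. F j)) / (2 * real m1)"
proof -
  have weight: "wgt m1 m2 (i1, 0) * real (card (Irow m1 m2 i1))
      = (if i1 = 0 \<or> i1 = int m1 then 1 else 2) / (2 * real m1)" for i1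
    using assms by (simp add: wgt_def Irow_def card_parity_block field_simps)
  have "{0..int m1} = {0} \<union> {1..<int m1} \<union> {int m1}" using assms(1) by auto
  hence "(\<Sum>i1\<in>{0..int m1}. wgt m1 m2 (i1, 0) * real (card (Irow m1 m2 i1)) * F i1)
      = (F 0 + (\<Sum>j\<in>{1..<int m1}. 2 * F j) + F (int m1)) / (2 * real m1)"
    using assms(1) by (simp add: weight sum.union_disjoint add_divide_distrib sum_divide_distrib)
  thus ?thesis by (simp add: sum_distrib_left[symmetric])
qed

lemma inner_w_chi_same_snd:
  assumes "m1 > 0" "m2 > 0" "snd \<gamma> = snd \<gamma>'" "even (fst \<gamma> + fst \<gamma>')"
  shows "inner_w m1 m2 (chi m1 m2 \<gamma>) (chi m1 m2 \<gamma>')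
    = of_real (((if 4 * int m1 dvd fst \<gamma> - fst \<gamma>' then 1 else 0)
              + (if 4 * int m1 dvd fst \<gamma> + fst \<gamma>' then 1 else 0)) / 2)"
proof -
  define a b where "a = fst \<gamma>" and "b = fst \<gamma>'"
  define F where "F j = cos_mode m1 a j * cos_mode m1 b j" for j
  have parity: "even (a - b)" "even (a + b)" using assms(4) unfolding a_def b_def by presburger+
  have F_eq: "F j = (cos_mode m1 (a - b) j + cos_mode m1 (a + b) j) / 2" for j
    unfolding F_def by (rule cos_mode_mult)
  have "inner_w m1 m2 (chi m1 m2 \<gamma>) (chi m1 m2 \<gamma>')
      = of_real (\<Sum>i1\<in>{0..int m1}. wgt m1 m2 (i1, 0) * real (card (Irow m1 m2 i1)) * F i1)"
    unfolding inner_w_chi_by_rows by (simp add: assms(3) F_def a_def b_def mult_ac)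
  also have "(\<Sum>i1\<in>{0..int m1}. wgt m1 m2 (i1, 0) * real (card (Irow m1 m2 i1)) * F i1)
      = (F 0 + F (int m1) + 2 * (\<Sum>j\<in>{1..<int m1}. F j)) / (2 * real m1)"
    using assms(1,2) by (rule sum_Irow_weighted)
  also have "F 0 + F (int m1) + 2 * (\<Sum>j\<in>{1..<int m1}. F j) = (\<Sum>j\<in>{0..<2 * int m1}. F j)"
    using assms(1) parity by (intro sum_symmetric_fold[symmetric]) (simp_all add: F_eq cos_mode_reflect)
  also have "\<dots> = ((\<Sum>j\<in>{0..<2 * int m1}. cos_mode m1 (a - b) j) + (\<Sum>j\<in>{0..<2 * int m1}. cos_mode m1 (a + b) j)) / 2"
    by (simp only: F_eq sum_divide_distrib[symmetric] sum.distrib)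
  also have "\<dots> = ((if 4 * int m1 dvd a - b then 2 * real m1 else 0)
                    + (if 4 * int m1 dvd a + b then 2 * real m1 else 0)) / 2"
    using assms(1) parity by (simp add: sum_cos_mode_period)
  finally have "inner_w m1 m2 (chi m1 m2 \<gamma>) (chi m1 m2 \<gamma>')
      = of_real (((if 4 * int m1 dvd a - b then 2 * real m1 else 0)
                + (if 4 * int m1 dvd a + b then 2 * real m1 else 0)) / 2 / (2 * real m1))" .
  thus ?thesis
    using assms(1) unfolding a_def b_def by (simp add: add_divide_distrib)
qed

lemma inner_w_chi_Gamma_sq:
  assumes "m1 > 0" "m2 > 0" "\<gamma> \<in> Gamma_sq m1 m2" "\<gamma>' \<in> Gamma_sq m1 m2"
  shows "inner_w m1 m2 (chi m1 m2 \<gamma>) (chi m1 m2 \<gamma>')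
    = (if \<gamma> = \<gamma>' then of_real (if fst \<gamma> \<in> {0, 2 * int m1} then 1 else 1 / 2) else 0)"
proof -
  have range: "0 \<le> fst \<gamma>" "fst \<gamma> \<le> 2 * int m1" "0 \<le> fst \<gamma>'" "fst \<gamma>' \<le> 2 * int m1"
      "\<bar>snd \<gamma> - snd \<gamma>'\<bar> < 2 * int m2"
    and parity: "even (fst \<gamma> + snd \<gamma>)" "even (fst \<gamma>' + snd \<gamma>')"
    using assms(3,4) by (auto simp: Gamma_sq_def Kset_def)
  show ?thesis
  proof (cases "snd \<gamma> = snd \<gamma>'")
    case True
    have "even (fst \<gamma> + fst \<gamma>')" using parity True by presburger
    moreover have "4 * int m1 dvd fst \<gamma> - fst \<gamma>' \<longleftrightarrow> \<gamma> = \<gamma>'"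
      using assms(1) range True by (subst dvd_iff_eq_0_if_abs_less) (auto simp: prod_eq_iff)
    moreover have "4 * int m1 dvd fst \<gamma> + fst \<gamma>' \<longleftrightarrow> \<gamma> = \<gamma>' \<and> fst \<gamma> \<in> {0, 2 * int m1}"
    proof (cases "fst \<gamma> + fst \<gamma>' = 4 * int m1")
      case False
      thus ?thesis using range True by (subst dvd_iff_eq_0_if_abs_less) (auto simp: prod_eq_iff)
    qed (use range True in \<open>auto simp: prod_eq_iff\<close>)
    ultimately show ?thesis using inner_w_chi_same_snd[OF assms(1,2) True] by auto
  next
    case False
    thus ?thesis using inner_w_chi_distinct_snd[OF assms(1,2) parity False range(5)] by auto
  qed
qed

theorem theorem5p1:
  fixes m1 m2 :: nat
  assumes "m1 \<ge> 1" and "m2 \<ge> 1"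
  shows "spectral_index_set m1 m2 (Gamma_sq m1 m2)
    \<and> card (Iset m1 m2) = (2 * m1 + 1) * m2
    \<and> (\<forall>\<gamma>\<in>Gamma_sq m1 m2.
         (norm_w m1 m2 (chi m1 m2 \<gamma>))\<^sup>2 =
           (if fst \<gamma> \<in> {0, 2 * int m1} then 1 else 1 / 2))"
proof -
  have m: "m1 > 0" "m2 > 0" using assms by auto
  note inner = inner_w_chi_Gamma_sq[OF m]
  have nonzero: "\<exists>i\<in>Iset m1 m2. chi m1 m2 \<gamma> i \<noteq> 0" for \<gamma>
    using m by (intro bexI[of _ "(0, 0)"]) (auto simp: Iset_def chi_def)
  have spans: "\<exists>c. \<forall>i\<in>Iset m1 m2. f i = (\<Sum>\<gamma>\<in>Gamma_sq m1 m2. c \<gamma> * chi m1 m2 \<gamma> i)" for f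
  proof (rule orthogonal_family_spans[where w="\<lambda>i. of_real (wgt m1 m2 i)"])
    show "finite (Iset m1 m2)" "finite (Gamma_sq m1 m2)" "card (Gamma_sq m1 m2) = card (Iset m1 m2)"
      by (simp_all add: finite_Iset finite_Gamma_sq card_Iset card_Gamma_sq)
  next
    fix \<gamma> \<gamma>' assume "\<gamma> \<in> Gamma_sq m1 m2" "\<gamma>' \<in> Gamma_sq m1 m2"
    from inner[OF this] show "(\<Sum>i\<in>Iset m1 m2. of_real (wgt m1 m2 i) * chi m1 m2 \<gamma> i * cnj (chi m1 m2 \<gamma>' i))
        = (if \<gamma> = \<gamma>' then of_real (if fst \<gamma> \<in> {0, 2 * int m1} then 1 else 1 / 2) else 0)"
      by (simp only: inner_w_def)
  qed simp
  have "spectral_index_set m1 m2 (Gamma_sq m1 m2)"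
    unfolding spectral_index_set_def using inner nonzero spans by (auto simp: Gamma_sq_def)
  moreover have "(norm_w m1 m2 (chi m1 m2 \<gamma>))\<^sup>2 = (if fst \<gamma> \<in> {0, 2 * int m1} then 1 else 1 / 2)"
    if "\<gamma> \<in> Gamma_sq m1 m2" for \<gamma>
    using inner[OF that that] by (simp add: norm_w_def)
  ultimately show ?thesis by (simp add: card_Iset)
qed

end
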